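(* Let $N$ be a finite set of players and $E$ a finite set of resources; for each $i\in N$ let $d_i\in\mathbb{N}$ and $E_i\subseteq E$ with $E_i\neq\emptyset$, and for each $e\in E$ let $c_e:\mathbb{N}\to\mathbb{R}_+$ be non-decreasing and convex. Define $f_i(U)=d_i$ if $U\cap E_i\neq\emptyset$ and $f_i(U)=0$ otherwise, and $C_{i,e}(x;t)=c_e(x+t)\,x$. Then each $f_i$ is an integral polymatroid rank function, $\mathbb{B}_{f_i}(d_i)$ is exactly the set of vectors $\vec x_i\in\mathbb{N}^E$ with $x_i(E)=d_i$ and $x_{i,e}=0$ for $e\notin E_i$, and each $C_{i,e}$ is regular; in particular, the singleton integer-splittable congestion game in which player $i$ distributes $d_i$ integral units over $E_i$ and has private cost $\pi_i(\vec x)=\sum_{e\in E}c_e(x_{i,e}+x_{-i,e})x_{i,e}$ is a polymatroid game.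
   Context: $\mathbb{N}=\{0,1,2,\dots\}$. An integral polymatroid rank function is $f:2^E\to\mathbb{N}$ with $f(\emptyset)=0$, monotone and submodular. $x(U)=\sum_{e\in U}x_e$, $\mathbb{B}_f(d)=\{\vec x\in\mathbb{N}^E: x(U)\le f(U)\ \forall U\subseteq E,\ x(E)=d\}$. $x_{-i,e}=\sum_{j\neq i}x_{j,e}$. For $C:\mathbb{N}\times\mathbb{N}\to\mathbb{R}$, $C^-(x;t)=C(x;t)-C(x-1;t)$ for $x\ge1$; $C$ is regular if $C^-(x;t)\le C^-(x;t+1)$ and $C^-(x;t+1)\le C^-(x+1;t)$ for all $x\ge1,t\in\mathbb{N}$. A polymatroid game consists of players $i\in N$ with demands $d_i$, integral polymatroid rank functions $f_i$ on the common resource set $E$, strategy sets $\mathbb{B}_{f_i}(d_i)$, and private costs $\pi_i(\vec x)=\sum_{e\in E}C_{i,e}(x_{i,e};x_{-i,e})$ with every $C_{i,e}:\mathbb{N}\times\mathbb{N}\to\mathbb{R}_+$ regular. *)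

theory Defs
  imports "HOL-Analysis.Analysis"
begin

text \<open>Vectors in N^E are functions 'e => nat that vanish outside the finite ground set E.\<close>

definition integral_polymatroid_rank :: "'e set \<Rightarrow> ('e set \<Rightarrow> nat) \<Rightarrow> bool" where
  "integral_polymatroid_rank E f \<longleftrightarrow>
     f {} = 0 \<and>
     (\<forall>U V. U \<subseteq> V \<and> V \<subseteq> E \<longrightarrow> f U \<le> f V) \<and>
     (\<forall>U V. U \<subseteq> E \<and> V \<subseteq> E \<longrightarrow> f (U \<union> V) + f (U \<inter> V) \<le> f U + f V)"

definition base_polytope :: "'e set \<Rightarrow> ('e set \<Rightarrow> nat) \<Rightarrow> nat \<Rightarrow> ('e \<Rightarrow> nat) set" where
  "base_polytope E f d =
     {x. (\<forall>e. e \<notin> E \<longrightarrow> x e = 0) \<and> (\<forall>U. U \<subseteq> E \<longrightarrow> sum x U \<le> f U) \<and> sum x E = d}"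

definition Cminus :: "(nat \<Rightarrow> nat \<Rightarrow> real) \<Rightarrow> nat \<Rightarrow> nat \<Rightarrow> real" where
  "Cminus C x t = C x t - C (x - 1) t"

definition regular :: "(nat \<Rightarrow> nat \<Rightarrow> real) \<Rightarrow> bool" where
  "regular C \<longleftrightarrow> (\<forall>x t. x \<ge> 1 \<longrightarrow>
      Cminus C x t \<le> Cminus C x (t + 1) \<and> Cminus C x (t + 1) \<le> Cminus C (x + 1) t)"

definition others_load :: "'n set \<Rightarrow> ('n \<Rightarrow> 'e \<Rightarrow> nat) \<Rightarrow> 'n \<Rightarrow> 'e \<Rightarrow> nat" where
  "others_load N x i e = (\<Sum>j\<in>N - {i}. x j e)"

definition private_cost ::
  "'n set \<Rightarrow> 'e set \<Rightarrow> ('n \<Rightarrow> 'e \<Rightarrow> nat \<Rightarrow> nat \<Rightarrow> real) \<Rightarrow> 'n \<Rightarrow> ('n \<Rightarrow> 'e \<Rightarrow> nat) \<Rightarrow> real" where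
  "private_cost N E C i x = (\<Sum>e\<in>E. C i e (x i e) (others_load N x i e))"

text \<open>A polymatroid game (N, E, d, f, C): strategy set of player i is base_polytope E (f i) (d i),
  private cost is private_cost N E C i.\<close>
definition polymatroid_game ::
  "'n set \<Rightarrow> 'e set \<Rightarrow> ('n \<Rightarrow> nat) \<Rightarrow> ('n \<Rightarrow> 'e set \<Rightarrow> nat) \<Rightarrow> ('n \<Rightarrow> 'e \<Rightarrow> nat \<Rightarrow> nat \<Rightarrow> real) \<Rightarrow> bool" where
  "polymatroid_game N E d f C \<longleftrightarrow>
     finite N \<and> finite E \<and>
     (\<forall>i\<in>N. integral_polymatroid_rank E (f i)) \<and>
     (\<forall>i\<in>N. \<forall>e\<in>E. regular (C i e) \<and> (\<forall>x t. C i e x t \<ge> 0))"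

definition convex_nat :: "(nat \<Rightarrow> real) \<Rightarrow> bool" where
  "convex_nat c \<longleftrightarrow> (\<forall>x. c (x + 1) - c x \<le> c (x + 2) - c (x + 1))"

end

theory Submission
  imports Defs
begin

text \<open>The rank function of the singleton game is an indicator of hitting the allowed
  resources A; its base polytope forces all weight onto A, and a convex non-decreasing
  per-unit cost c makes the total cost c (x + t) * x regular: raising the others' load t
  increases the marginal cost by x times a second difference of c plus a first difference,
  and moving one unit from the others to oneself increases it by a first difference.\<close>

lemma integral_polymatroid_rank_hitting:
  "integral_polymatroid_rank E (\<lambda>U. if U \<inter> A \<noteq> {} then d else 0)"
  unfolding integral_polymatroid_rank_def by auto

lemma base_polytope_hitting:
  assumes "finite E"
  shows "base_polytope E (\<lambda>U. if U \<inter> A \<noteq> {} then d else 0) d =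
    {x. (\<forall>e. e \<notin> E \<longrightarrow> x e = 0) \<and> sum x E = d \<and> (\<forall>e\<in>E. e \<notin> A \<longrightarrow> x e = 0)}"
    (is "base_polytope E ?f d = ?B")
proof (rule set_eqI, rule iffI)
  fix x assume "x \<in> base_polytope E ?f d"
  hence outside: "\<forall>e. e \<notin> E \<longrightarrow> x e = 0" and bound: "\<forall>U. U \<subseteq> E \<longrightarrow> sum x U \<le> ?f U"
    and total: "sum x E = d"
    unfolding base_polytope_def by auto
  have "(E - A) \<inter> A = {}" by blast
  hence "sum x (E - A) = 0" using bound[rule_format, of "E - A"] by simp
  hence "\<forall>e\<in>E - A. x e = 0" using assms by simp
  thus "x \<in> ?B" using outside total by auto
next
  fix x assume "x \<in> ?B"
  hence outside: "\<forall>e. e \<notin> E \<longrightarrow> x e = 0" and total: "sum x E = d"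
    and off_A: "\<forall>e\<in>E. e \<notin> A \<longrightarrow> x e = 0"
    by auto
  have "sum x U \<le> ?f U" if "U \<subseteq> E" for U
  proof (cases "U \<inter> A = {}")
    case True
    thus ?thesis using off_A \<open>U \<subseteq> E\<close> by (auto intro: sum.neutral)
  next
    case False
    have "sum x U \<le> sum x E" using \<open>U \<subseteq> E\<close> assms by (intro sum_mono2) auto
    thus ?thesis using False total by simp
  qed
  thus "x \<in> base_polytope E ?f d" unfolding base_polytope_def using outside total by auto
qed

lemma Cminus_load_times_quantity:
  "Cminus (\<lambda>x t. c (x + t) * real x) (Suc k) t = c (k + t + 1) * (real k + 1) - c (k + t) * real k"
  unfolding Cminus_def by (simp add: add.commute add.left_commute)

lemma regular_load_times_quantity:
  fixes c :: "nat \<Rightarrow> real"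
  assumes "mono c" and "convex_nat c"
  shows "regular (\<lambda>x t. c (x + t) * real x)"
  unfolding regular_def
proof (intro allI impI)
  fix x t :: nat assume "1 \<le> x"
  then obtain k where x: "x = Suc k" by (cases x) auto
  define y where "y = k + t"
  have second_diff: "c (y + 1) - c y \<le> c (y + 2) - c (y + 1)"
    using \<open>convex_nat c\<close> unfolding convex_nat_def by blast
  have first_diff: "c (y + 1) \<le> c (y + 2)"
    using \<open>mono c\<close> by (simp add: mono_def)
  have "real k * ((c (y + 2) - c (y + 1)) - (c (y + 1) - c y)) \<ge> 0"
    using second_diff by simp
  hence "c (y + 1) * (real k + 1) - c y * real k \<le> c (y + 2) * (real k + 1) - c (y + 1) * real k"
    using first_diff by (simp add: algebra_simps)
  moreover have "c (y + 2) * (real k + 1) - c (y + 1) * real k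
      \<le> c (y + 2) * (real (Suc k) + 1) - c (y + 1) * real (Suc k)"
    using first_diff by (simp add: algebra_simps)
  ultimately show "Cminus (\<lambda>x t. c (x + t) * real x) x t \<le> Cminus (\<lambda>x t. c (x + t) * real x) x (t + 1)
      \<and> Cminus (\<lambda>x t. c (x + t) * real x) x (t + 1) \<le> Cminus (\<lambda>x t. c (x + t) * real x) (x + 1) t"
    unfolding x Suc_eq_plus1[symmetric] Cminus_load_times_quantity y_def
    by (simp add: add.assoc)
qed

theorem proposition4p1:
  fixes N :: "'n set" and E :: "'e set" and d :: "'n \<Rightarrow> nat"
    and Ei :: "'n \<Rightarrow> 'e set" and c :: "'e \<Rightarrow> nat \<Rightarrow> real"
    and f :: "'n \<Rightarrow> 'e set \<Rightarrow> nat" and C :: "'n \<Rightarrow> 'e \<Rightarrow> nat \<Rightarrow> nat \<Rightarrow> real"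
  assumes "finite N" and "finite E"
    and "\<forall>i\<in>N. Ei i \<subseteq> E \<and> Ei i \<noteq> {}"
    and "\<forall>e\<in>E. (\<forall>x. c e x \<ge> 0) \<and> mono (c e) \<and> convex_nat (c e)"
    and f_def: "\<forall>i U. f i U = (if U \<inter> Ei i \<noteq> {} then d i else 0)"
    and C_def: "\<forall>i e x t. C i e x t = c e (x + t) * real x"
  shows "(\<forall>i\<in>N. integral_polymatroid_rank E (f i))
    \<and> (\<forall>i\<in>N. base_polytope E (f i) (d i) =
          {xi. (\<forall>e. e \<notin> E \<longrightarrow> xi e = 0) \<and> sum xi E = d i \<and> (\<forall>e\<in>E. e \<notin> Ei i \<longrightarrow> xi e = 0)})
    \<and> (\<forall>i\<in>N. \<forall>e\<in>E. regular (C i e))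
    \<and> polymatroid_game N E d f C
    \<and> (\<forall>i\<in>N. \<forall>x. private_cost N E C i x
          = (\<Sum>e\<in>E. c e (x i e + others_load N x i e) * real (x i e)))"
proof -
  have f_eq: "f i = (\<lambda>U. if U \<inter> Ei i \<noteq> {} then d i else 0)" for i
    using f_def by auto
  have C_eq: "C i e = (\<lambda>x t. c e (x + t) * real x)" for i e
    using C_def by (intro ext) simp
  have rank: "\<forall>i\<in>N. integral_polymatroid_rank E (f i)"
    unfolding f_eq by (simp add: integral_polymatroid_rank_hitting)
  have regular: "\<forall>i\<in>N. \<forall>e\<in>E. regular (C i e)"
    using assms(4) unfolding C_eq by (simp add: regular_load_times_quantity)
  have "polymatroid_game N E d f C"
    unfolding polymatroid_game_def using assms(1,2,4) rank regular by (simp add: C_eq)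
  moreover have "\<forall>i\<in>N. \<forall>x. private_cost N E C i x
      = (\<Sum>e\<in>E. c e (x i e + others_load N x i e) * real (x i e))"
    unfolding private_cost_def C_eq by simp
  ultimately show ?thesis
    using rank regular base_polytope_hitting[OF \<open>finite E\<close>] by (simp add: f_eq)
qed

end
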